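(* Let $G$ be a Lie group, $H\subseteq G$ a closed subgroup, and $\mathfrak{g}=\mathfrak{h}\oplus\mathfrak{m}$ a reductive decomposition. Equip $G/H$ with a $G$-invariant Riemannian metric (an $\mathrm{Ad}(H)$-invariant inner product $\langle\cdot,\cdot\rangle$ on $\mathfrak{m}$) with Levi-Civita connection $\nabla$. If $G/H$ admits a $G$-invariant essential Codazzi tensor field $A$, then the non-associative algebra $(\mathfrak{m},[\cdot,\cdot]_{\mathfrak{m}})$ is neither nilpotent nor split-solvable.
   Context: A reductive decomposition means $\mathfrak{m}$ is an $\mathrm{Ad}(H)$-invariant vector space complement of $\mathfrak{h}$ in $\mathfrak{g}$; $[X,Y]_{\mathfrak{m}}$ is the $\mathfrak{m}$-component of $[X,Y]$ in $\mathfrak{g}=\mathfrak{h}\oplus\mathfrak{m}$. $G$-invariant tensor fields on $G/H$ correspond to $\mathrm{Ad}(H)$-invariant tensors on $\mathfrak{m}\cong T_{eH}(G/H)$. A Codazzi tensor field is a symmetric twice-covariant tensor field $A$ with $(\nabla_XA)(Y,Z)=(\nabla_YA)(X,Z)$ for all vector fields $X,Y,Z$. A $G$-invariant Codazzi tensor field $A$ is called essential if $\nabla A\neq 0$ and none of the eigenspaces $\mathfrak{m}_i$ of $A$ on $\mathfrak{m}$ (relative to $\langle\cdot,\cdot\rangle$) is an ideal of $(\mathfrak{m},[\cdot,\cdot]_{\mathfrak{m}})$. A non-associative algebra $\mathfrak{a}$ is nilpotent if there is a positive integer $t$ such that every product of $t$ elements of $\mathfrak{a}$, however associated, is zero; it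 is split-solvable if there is a chain $\mathfrak{a}=\mathfrak{a}_0\supseteq\cdots\supseteq\mathfrak{a}_p=0$ of ideals of $\mathfrak{a}$ with $\dim(\mathfrak{a}_i/\mathfrak{a}_{i+1})=1$ for all $i$. *)

theory Defs
  imports "HOL-Analysis.Analysis"
begin

text \<open>Algebraic (infinitesimal) model of a reductive homogeneous Riemannian
space G/H.  The Lie algebra g is a finite-dimensional real vector space
(type 'g of class euclidean_space; its built-in inner product is NOT used),
br is the Lie bracket, h and m are the subspaces with g = h + m,
AdH is the set of linear maps Ad(h), h in H, and ip is the inner product on m.\<close>

definition lie_algebra :: "('g::real_vector \<Rightarrow> 'g \<Rightarrow> 'g) \<Rightarrow> bool" where
  "lie_algebra br \<longleftrightarrow> bilinear br \<and> (\<forall>x. br x x = 0) \<and>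
     (\<forall>x y z. br x (br y z) + br y (br z x) + br z (br x y) = 0)"

definition reductive_decomposition ::
  "('g::real_vector \<Rightarrow> 'g \<Rightarrow> 'g) \<Rightarrow> 'g set \<Rightarrow> 'g set \<Rightarrow> ('g \<Rightarrow> 'g) set \<Rightarrow> bool" where
  "reductive_decomposition br h m AdH \<longleftrightarrow>
     lie_algebra br \<and> subspace h \<and> subspace m \<and>
     (\<forall>x\<in>h. \<forall>y\<in>h. br x y \<in> h) \<and>
     h \<inter> m = {0} \<and> (\<forall>x. \<exists>a\<in>h. \<exists>b\<in>m. x = a + b) \<and>
     (\<forall>x\<in>h. \<forall>y\<in>m. br x y \<in> m) \<and>
     (\<forall>\<phi>\<in>AdH. linear \<phi> \<and> bij \<phi> \<and> (\<forall>x y. \<phi> (br x y) = br (\<phi> x) (\<phi> y)) \<and>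
        \<phi> ` h = h \<and> \<phi> ` m = m)"

definition mproj :: "'g::real_vector set \<Rightarrow> 'g set \<Rightarrow> 'g \<Rightarrow> 'g" where
  "mproj h m x = (THE y. y \<in> m \<and> x - y \<in> h)"

definition brm :: "('g::real_vector \<Rightarrow> 'g \<Rightarrow> 'g) \<Rightarrow> 'g set \<Rightarrow> 'g set \<Rightarrow> 'g \<Rightarrow> 'g \<Rightarrow> 'g" where
  "brm br h m x y = mproj h m (br x y)"

text \<open>Ad(H)-invariant inner product on m (hence also ad(h)-invariant).\<close>
definition invariant_inner_product ::
  "('g::real_vector \<Rightarrow> 'g \<Rightarrow> 'g) \<Rightarrow> 'g set \<Rightarrow> 'g set \<Rightarrow> ('g \<Rightarrow> 'g) set \<Rightarrow> ('g \<Rightarrow> 'g \<Rightarrow> real) \<Rightarrow> bool" where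
  "invariant_inner_product br h m AdH ip \<longleftrightarrow>
     bilinear ip \<and> (\<forall>x\<in>m. \<forall>y\<in>m. ip x y = ip y x) \<and> (\<forall>x\<in>m. x \<noteq> 0 \<longrightarrow> ip x x > 0) \<and>
     (\<forall>\<phi>\<in>AdH. \<forall>x\<in>m. \<forall>y\<in>m. ip (\<phi> x) (\<phi> y) = ip x y) \<and>
     (\<forall>z\<in>h. \<forall>x\<in>m. \<forall>y\<in>m. ip (br z x) y + ip x (br z y) = 0)"

text \<open>G-invariant symmetric 2-tensor field = Ad(H)-invariant symmetric bilinear form on m.\<close>
definition invariant_sym_form ::
  "('g::real_vector \<Rightarrow> 'g \<Rightarrow> 'g) \<Rightarrow> 'g set \<Rightarrow> 'g set \<Rightarrow> ('g \<Rightarrow> 'g) set \<Rightarrow> ('g \<Rightarrow> 'g \<Rightarrow> real) \<Rightarrow> bool" where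
  "invariant_sym_form br h m AdH A \<longleftrightarrow>
     bilinear A \<and> (\<forall>x\<in>m. \<forall>y\<in>m. A x y = A y x) \<and>
     (\<forall>\<phi>\<in>AdH. \<forall>x\<in>m. \<forall>y\<in>m. A (\<phi> x) (\<phi> y) = A x y) \<and>
     (\<forall>z\<in>h. \<forall>x\<in>m. \<forall>y\<in>m. A (br z x) y + A x (br z y) = 0)"

text \<open>Nomizu map of the Levi-Civita connection at the origin:
  Lambda(X)Y = 1/2 [X,Y]_m + U(X,Y), where
  2<U(X,Y),Z> = <[Z,X]_m,Y> + <X,[Z,Y]_m>.\<close>
definition lc_map ::
  "('g::real_vector \<Rightarrow> 'g \<Rightarrow> 'g) \<Rightarrow> 'g set \<Rightarrow> 'g set \<Rightarrow> ('g \<Rightarrow> 'g \<Rightarrow> real) \<Rightarrow> 'g \<Rightarrow> 'g \<Rightarrow> 'g" where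
  "lc_map br h m ip X Y = (THE W. W \<in> m \<and> (\<forall>Z\<in>m.
      2 * ip W Z = ip (brm br h m X Y) Z + ip (brm br h m Z X) Y + ip X (brm br h m Z Y)))"

text \<open>Covariant derivative of a G-invariant 2-tensor at the origin:
  (nabla_X A)(Y,Z) = - A(Lambda(X)Y, Z) - A(Y, Lambda(X)Z).\<close>
definition cov_deriv ::
  "('g::real_vector \<Rightarrow> 'g \<Rightarrow> 'g) \<Rightarrow> 'g set \<Rightarrow> 'g set \<Rightarrow> ('g \<Rightarrow> 'g \<Rightarrow> real) \<Rightarrow> ('g \<Rightarrow> 'g \<Rightarrow> real)
     \<Rightarrow> 'g \<Rightarrow> 'g \<Rightarrow> 'g \<Rightarrow> real" where
  "cov_deriv br h m ip A X Y Z = - A (lc_map br h m ip X Y) Z - A Y (lc_map br h m ip X Z)"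

definition codazzi ::
  "('g::real_vector \<Rightarrow> 'g \<Rightarrow> 'g) \<Rightarrow> 'g set \<Rightarrow> 'g set \<Rightarrow> ('g \<Rightarrow> 'g \<Rightarrow> real) \<Rightarrow> ('g \<Rightarrow> 'g \<Rightarrow> real) \<Rightarrow> bool" where
  "codazzi br h m ip A \<longleftrightarrow>
     (\<forall>X\<in>m. \<forall>Y\<in>m. \<forall>Z\<in>m. cov_deriv br h m ip A X Y Z = cov_deriv br h m ip A Y X Z)"

definition eigenspace_form :: "'g set \<Rightarrow> ('g \<Rightarrow> 'g \<Rightarrow> real) \<Rightarrow> ('g \<Rightarrow> 'g \<Rightarrow> real) \<Rightarrow> real \<Rightarrow> 'g set" where
  "eigenspace_form m ip A lam = {x \<in> m. \<forall>y\<in>m. A x y = lam * ip x y}"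

definition alg_ideal :: "'g::real_vector set \<Rightarrow> ('g \<Rightarrow> 'g \<Rightarrow> 'g) \<Rightarrow> 'g set \<Rightarrow> bool" where
  "alg_ideal m mul I \<longleftrightarrow> subspace I \<and> I \<subseteq> m \<and>
     (\<forall>x\<in>m. \<forall>y\<in>I. mul x y \<in> I \<and> mul y x \<in> I)"

definition essential_codazzi ::
  "('g::real_vector \<Rightarrow> 'g \<Rightarrow> 'g) \<Rightarrow> 'g set \<Rightarrow> 'g set \<Rightarrow> ('g \<Rightarrow> 'g) set \<Rightarrow> ('g \<Rightarrow> 'g \<Rightarrow> real)
     \<Rightarrow> ('g \<Rightarrow> 'g \<Rightarrow> real) \<Rightarrow> bool" where
  "essential_codazzi br h m AdH ip A \<longleftrightarrow>
     invariant_sym_form br h m AdH A \<and> codazzi br h m ip A \<and>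
     (\<exists>X\<in>m. \<exists>Y\<in>m. \<exists>Z\<in>m. cov_deriv br h m ip A X Y Z \<noteq> 0) \<and>
     (\<forall>lam. eigenspace_form m ip A lam \<noteq> {0} \<longrightarrow>
        \<not> alg_ideal m (brm br h m) (eigenspace_form m ip A lam))"

inductive alg_product :: "'g set \<Rightarrow> ('g \<Rightarrow> 'g \<Rightarrow> 'g) \<Rightarrow> nat \<Rightarrow> 'g \<Rightarrow> bool"
  for m mul where
  single: "x \<in> m \<Longrightarrow> alg_product m mul 1 x"
| mult: "alg_product m mul i x \<Longrightarrow> alg_product m mul j y \<Longrightarrow> alg_product m mul (i + j) (mul x y)"

definition alg_nilpotent :: "'g::zero set \<Rightarrow> ('g \<Rightarrow> 'g \<Rightarrow> 'g) \<Rightarrow> bool" where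
  "alg_nilpotent m mul \<longleftrightarrow> (\<exists>t>0. \<forall>x. alg_product m mul t x \<longrightarrow> x = 0)"

definition alg_split_solvable :: "'g::real_vector set \<Rightarrow> ('g \<Rightarrow> 'g \<Rightarrow> 'g) \<Rightarrow> bool" where
  "alg_split_solvable m mul \<longleftrightarrow> (\<exists>a::nat \<Rightarrow> 'g set. \<exists>p.
     a 0 = m \<and> a p = {0} \<and>
     (\<forall>i\<le>p. alg_ideal m mul (a i)) \<and>
     (\<forall>i<p. a (Suc i) \<subseteq> a i \<and> dim (a i) = dim (a (Suc i)) + 1))"

end

theory Submission
  imports Defs
begin

text \<open>Let X be an eigenvector of A, with eigenvalue lam relative to the metric ip, and write
  A_lam = A - lam ip. The Codazzi equation, together with the torsion-freeness and metric
  compatibility of the Nomizu map \<Lambda>, gives A_lam([X, Y]_m, Z) + A_lam(Y, \<Lambda>(X) Z) = 0.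
  In a nilpotent algebra (powers of m) and in a split-solvable one (its flag of ideals) there is a
  chain of subspaces from m down to 0 on whose successive quotients [X, -]_m acts by scalars.
  Descending along the chain, this identity forces A_lam(Y, \<Lambda>(X) Z) = 0 for all Y, Z, and
  then (\<nabla>_X A)(Y, Z) = 0. The eigenvectors of the symmetric form A span m, so \<nabla>A = 0,
  contradicting essentiality.\<close>

section \<open>Symmetric bilinear forms on Euclidean spaces\<close>

lemma linear_functional_inner_representation:
  fixes g :: "'a::euclidean_space \<Rightarrow> real"
  assumes "linear g"
  shows "(\<Sum>b\<in>Basis. g b *\<^sub>R b) \<bullet> z = g z"
proof -
  have "g z = g (\<Sum>b\<in>Basis. (z \<bullet> b) *\<^sub>R b)"
    by (simp add: euclidean_representation)
  also have "\<dots> = (\<Sum>b\<in>Basis. g b * (b \<bullet> z))"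
    using assms by (simp add: linear_sum linear_scale inner_commute mult.commute)
  also have "\<dots> = (\<Sum>b\<in>Basis. g b *\<^sub>R b) \<bullet> z"
    by (simp add: inner_sum_left)
  finally show ?thesis ..
qed

lemma bilinear_inner_representation:
  fixes B :: "'a::euclidean_space \<Rightarrow> 'a \<Rightarrow> real"
  assumes "bilinear B"
  obtains \<Phi> where "linear \<Phi>" "\<And>v z. \<Phi> v \<bullet> z = B v z"
proof
  define \<Phi> where "\<Phi> v = (\<Sum>b\<in>Basis. B v b *\<^sub>R b)" for v
  show "\<Phi> v \<bullet> z = B v z" for v z
    unfolding \<Phi>_def using assms by (intro linear_functional_inner_representation) (simp add: bilinear_def)
  show "linear \<Phi>"
    unfolding \<Phi>_def using assms
    by (intro linearI) (simp_all add: bilinear_ladd bilinear_lmul scaleR_add_left sum.distrib scaleR_sum_right)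
qed

lemma orthogonal_to_orthogonal_complement_imp_in_subspace:
  fixes z :: "'a::euclidean_space"
  assumes V: "subspace V" and z: "\<And>w. \<forall>x\<in>V. orthogonal x w \<Longrightarrow> orthogonal z w"
  shows "z \<in> V"
proof -
  have "span V = V"
    using V by simp
  then obtain a b where "a \<in> V" and b: "\<And>x. x \<in> V \<Longrightarrow> orthogonal b x" and "z = a + b"
    using orthogonal_subspace_decomp_exists[of V z] by metis
  have "z \<bullet> b = 0" "a \<bullet> b = 0"
    using z b \<open>a \<in> V\<close> orthogonal_commute unfolding orthogonal_def by blast+
  then have "b = 0"
    using \<open>z = a + b\<close> by (simp add: inner_add_left)
  then show ?thesis
    using \<open>a \<in> V\<close> \<open>z = a + b\<close> by simp
qed

lemma bilinear_form_representation:
  fixes B :: "'a::euclidean_space \<Rightarrow> 'a \<Rightarrow> real"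
  assumes B: "bilinear B" and V: "subspace V"
    and pos: "\<And>x. x \<in> V \<Longrightarrow> x \<noteq> 0 \<Longrightarrow> B x x > 0" and f: "linear f"
  shows "\<exists>q\<in>V. \<forall>z\<in>V. B q z = f z"
proof -
  obtain \<Phi> where "linear \<Phi>" and \<Phi>: "\<And>v z. \<Phi> v \<bullet> z = B v z"
    using bilinear_inner_representation[OF B] by blast
  define r where "r = (\<Sum>b\<in>Basis. f b *\<^sub>R b)"
  have r: "r \<bullet> z = f z" for z
    unfolding r_def using f by (rule linear_functional_inner_representation)
  define Vperp where "Vperp = {w. \<forall>x\<in>V. orthogonal x w}"
  define U where "U = {x + w |x w. x \<in> \<Phi> ` V \<and> w \<in> Vperp}"
  have "subspace U"
    unfolding U_def Vperp_def
    by (intro subspace_sums linear_subspace_image \<open>linear \<Phi>\<close> V subspace_orthogonal_to_vectors)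
  then have "span U = U"
    by simp
  then obtain y z where "y \<in> U" and z: "\<And>w. w \<in> U \<Longrightarrow> orthogonal z w" and "r = y + z"
    using orthogonal_subspace_decomp_exists[of U r] by metis
  \<comment> \<open>z is orthogonal to the complement of V and to \<Phi> z, which forces z \<in> V and then z = 0.\<close>
  have "\<Phi> 0 = 0" "0 \<in> V"
    using \<open>linear \<Phi>\<close> V by (simp_all add: linear_0 subspace_0)
  then have "Vperp \<subseteq> U"
    unfolding U_def by force
  then have "z \<in> V"
    using z by (intro orthogonal_to_orthogonal_complement_imp_in_subspace[OF V]) (auto simp: Vperp_def)
  moreover have "\<Phi> ` V \<subseteq> U"
    unfolding U_def Vperp_def by (force simp: orthogonal_def)
  ultimately have "orthogonal z (\<Phi> z)"
    using z by blast
  then have "B z z = 0"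
    using \<Phi>[of z z] by (simp add: orthogonal_def inner_commute)
  then have "r \<in> U"
    using pos \<open>z \<in> V\<close> \<open>r = y + z\<close> \<open>y \<in> U\<close> by fastforce
  then obtain q w where "q \<in> V" "w \<in> Vperp" "r = \<Phi> q + w"
    unfolding U_def by blast
  then have "B q x = f x" if "x \<in> V" for x
    using that r[of x] \<Phi>[of q x] unfolding Vperp_def orthogonal_def
    by (simp add: inner_add_left inner_commute[of w x])
  then show ?thesis
    using \<open>q \<in> V\<close> by blast
qed

lemma nonpos_quadratic_linear_coeff_eq_0:
  fixes a b :: real
  assumes "\<And>t. 2 * t * a + t\<^sup>2 * b \<le> 0"
  shows "a = 0"
proof -
  define s where "s = \<bar>b\<bar> + 1"
  have "s > 0" "2 * s + b > 0"
    unfolding s_def by (auto simp: abs_if)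
  have "s\<^sup>2 * (2 * (a / s) * a + (a / s)\<^sup>2 * b) = a\<^sup>2 * (2 * s + b)"
    using \<open>s > 0\<close> by (simp add: field_simps power2_eq_square)
  moreover have "s\<^sup>2 * (2 * (a / s) * a + (a / s)\<^sup>2 * b) \<le> 0"
    using assms[of "a / s"] by (simp add: mult_nonneg_nonpos)
  ultimately have "a\<^sup>2 \<le> 0"
    using \<open>2 * s + b > 0\<close> by (simp add: mult_le_0_iff)
  then show ?thesis
    by simp
qed

lemma nonpos_form_isotropic_orthogonal:
  fixes C :: "'a::real_vector \<Rightarrow> 'a \<Rightarrow> real"
  assumes C: "bilinear C" and W: "subspace W"
    and sym: "\<And>u v. u \<in> W \<Longrightarrow> v \<in> W \<Longrightarrow> C u v = C v u"
    and nonpos: "\<And>u. u \<in> W \<Longrightarrow> C u u \<le> 0"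
    and "x \<in> W" "C x x = 0" "v \<in> W"
  shows "C x v = 0"
proof (rule nonpos_quadratic_linear_coeff_eq_0)
  fix t
  have "x + t *\<^sub>R v \<in> W"
    using W \<open>x \<in> W\<close> \<open>v \<in> W\<close> by (simp add: subspace_add subspace_scale)
  then have "C (x + t *\<^sub>R v) (x + t *\<^sub>R v) \<le> 0"
    by (rule nonpos)
  moreover have "C v x = C x v"
    using sym \<open>x \<in> W\<close> \<open>v \<in> W\<close> by simp
  ultimately show "2 * t * C x v + t\<^sup>2 * C v v \<le> 0"
    using C \<open>C x x = 0\<close>
    by (simp add: bilinear_ladd bilinear_radd bilinear_lmul bilinear_rmul algebra_simps power2_eq_square)
qed

lemma rayleigh_quotient_attains_max:
  fixes A B :: "'a::euclidean_space \<Rightarrow> 'a \<Rightarrow> real"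
  assumes A: "bilinear A" and B: "bilinear B" and W: "subspace W" "W \<noteq> {0}"
    and pos: "\<And>x. x \<in> W \<Longrightarrow> x \<noteq> 0 \<Longrightarrow> B x x > 0"
  shows "\<exists>x\<in>W. x \<noteq> 0 \<and> (\<forall>u\<in>W. A u u \<le> A x x / B x x * B u u)"
proof -
  let ?R = "\<lambda>u. A u u / B u u"
  define K where "K = sphere 0 1 \<inter> W"
  have "compact K"
    unfolding K_def using W by (intro compact_Int_closed closed_subspace) auto
  obtain w where "w \<in> W" "w \<noteq> 0"
    using W subspace_0 by blast
  then have "w /\<^sub>R norm w \<in> K"
    unfolding K_def using W by (simp add: subspace_scale)
  then have "K \<noteq> {}"
    by blast
  have "continuous_on K ?R"
    using pos unfolding K_def
    by (intro continuous_intros bilinear_continuous_on_compose[OF _ _ A] 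
        bilinear_continuous_on_compose[OF _ _ B]) force+
  then obtain x where "x \<in> K" and xmax: "\<And>u. u \<in> K \<Longrightarrow> ?R u \<le> ?R x"
    using continuous_attains_sup[OF \<open>compact K\<close> \<open>K \<noteq> {}\<close>] by blast
  have "x \<in> W" "x \<noteq> 0"
    using \<open>x \<in> K\<close> unfolding K_def by auto
  \<comment> \<open>The quotient is invariant under scaling, so its maximum on the unit sphere is a global one.\<close>
  have "A u u \<le> ?R x * B u u" if "u \<in> W" for u
  proof (cases "u = 0")
    case True
    then show ?thesis
      using A B by (simp add: bilinear_lzero)
  next
    case False
    have "?R (u /\<^sub>R norm u) = ?R u"
      using False A B by (simp add: bilinear_lmul bilinear_rmul)
    moreover have "u /\<^sub>R norm u \<in> K"
      unfolding K_def using False W \<open>u \<in> W\<close> by (simp add: subspace_scale)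
    ultimately have "?R u \<le> ?R x"
      using xmax by metis
    then show ?thesis
      using pos[OF \<open>u \<in> W\<close> False] by (simp add: divide_le_eq)
  qed
  then show ?thesis
    using \<open>x \<in> W\<close> \<open>x \<noteq> 0\<close> by blast
qed

lemma symmetric_form_has_eigenvector:
  fixes A B :: "'a::euclidean_space \<Rightarrow> 'a \<Rightarrow> real"
  assumes A: "bilinear A" and B: "bilinear B" and W: "subspace W" "W \<noteq> {0}"
    and symA: "\<And>x y. x \<in> W \<Longrightarrow> y \<in> W \<Longrightarrow> A x y = A y x"
    and symB: "\<And>x y. x \<in> W \<Longrightarrow> y \<in> W \<Longrightarrow> B x y = B y x"
    and pos: "\<And>x. x \<in> W \<Longrightarrow> x \<noteq> 0 \<Longrightarrow> B x x > 0"
  shows "\<exists>x\<in>W. x \<noteq> 0 \<and> (\<exists>\<mu>. \<forall>v\<in>W. A x v = \<mu> * B x v)"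
proof -
  obtain x where "x \<in> W" "x \<noteq> 0" and max: "\<forall>u\<in>W. A u u \<le> A x x / B x x * B u u"
    using rayleigh_quotient_attains_max[OF A B W pos] by blast
  define \<mu> where "\<mu> = A x x / B x x"
  define C where "C u v = A u v - \<mu> * B u v" for u v
  have "bilinear C"
    unfolding bilinear_def C_def using A B
    by (intro allI conjI linearI)
      (simp_all add: bilinear_ladd bilinear_radd bilinear_lmul bilinear_rmul algebra_simps)
  have "C x v = 0" if "v \<in> W" for v
  proof (rule nonpos_form_isotropic_orthogonal[OF \<open>bilinear C\<close> W(1) _ _ \<open>x \<in> W\<close> _ that])
    show "C u v = C v u" if "u \<in> W" "v \<in> W" for u v
      using symA symB that unfolding C_def by simp
    show "C u u \<le> 0" if "u \<in> W" for u
      using max that unfolding C_def \<mu>_def by simp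
    show "C x x = 0"
      using pos[OF \<open>x \<in> W\<close> \<open>x \<noteq> 0\<close>] unfolding C_def \<mu>_def by simp
  qed
  then show ?thesis
    using \<open>x \<in> W\<close> \<open>x \<noteq> 0\<close> unfolding C_def by auto
qed

lemma form_orthogonal_decomposition:
  fixes B :: "'a::euclidean_space \<Rightarrow> 'a \<Rightarrow> real"
  assumes B: "bilinear B" and m: "subspace m" and E: "subspace E" "E \<subseteq> m"
    and pos: "\<And>x. x \<in> m \<Longrightarrow> x \<noteq> 0 \<Longrightarrow> B x x > 0" and "u \<in> m"
  shows "\<exists>e\<in>E. u - e \<in> {w \<in> m. \<forall>z\<in>E. B w z = 0}"
proof -
  have "linear (B u)"
    using B by (simp add: bilinear_def)
  moreover have "B x x > 0" if "x \<in> E" "x \<noteq> 0" for x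
    using pos that E by blast
  ultimately obtain e where "e \<in> E" "\<forall>z\<in>E. B e z = B u z"
    using bilinear_form_representation[OF B E(1)] by blast
  moreover have "u - e \<in> m"
    using E m \<open>u \<in> m\<close> \<open>e \<in> E\<close> by (auto simp: subspace_diff)
  ultimately show ?thesis
    by (auto simp: bilinear_lsub[OF B])
qed

lemma eigenvector_span_form_orthogonal:
  fixes A B :: "'a::real_vector \<Rightarrow> 'a \<Rightarrow> real"
  assumes A: "bilinear A"
    and symA: "\<And>x y. x \<in> m \<Longrightarrow> y \<in> m \<Longrightarrow> A x y = A y x"
    and symB: "\<And>x y. x \<in> m \<Longrightarrow> y \<in> m \<Longrightarrow> B x y = B y x"
    and "w \<in> m" and w: "\<And>z. z \<in> (\<Union>lam. eigenspace_form m B A lam) \<Longrightarrow> B w z = 0"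
    and "e \<in> span (\<Union>lam. eigenspace_form m B A lam)"
  shows "A w e = 0"
proof (rule linear_eq_0_on_span[OF _ _ \<open>e \<in> span _\<close>])
  show "linear (A w)"
    using A by (simp add: bilinear_def)
  fix z
  assume z: "z \<in> (\<Union>lam. eigenspace_form m B A lam)"
  then obtain lam where "z \<in> m" "A z w = lam * B z w"
    using \<open>w \<in> m\<close> unfolding eigenspace_form_def by blast
  then show "A w z = 0"
    using w[OF z] symA[OF \<open>w \<in> m\<close> \<open>z \<in> m\<close>] symB[OF \<open>w \<in> m\<close> \<open>z \<in> m\<close>] by simp
qed

lemma eigenvector_of_form_complement:
  fixes A B :: "'a::euclidean_space \<Rightarrow> 'a \<Rightarrow> real" and m :: "'a set"
  defines "E \<equiv> span (\<Union>lam. eigenspace_form m B A lam)"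
  defines "W \<equiv> {w \<in> m. \<forall>e\<in>E. B w e = 0}"
  assumes A: "bilinear A" and B: "bilinear B" and m: "subspace m"
    and symA: "\<And>x y. x \<in> m \<Longrightarrow> y \<in> m \<Longrightarrow> A x y = A y x"
    and symB: "\<And>x y. x \<in> m \<Longrightarrow> y \<in> m \<Longrightarrow> B x y = B y x"
    and pos: "\<And>x. x \<in> m \<Longrightarrow> x \<noteq> 0 \<Longrightarrow> B x x > 0"
    and "x \<in> W" and x: "\<forall>v\<in>W. A x v = \<mu> * B x v"
  shows "x \<in> eigenspace_form m B A \<mu>"
proof -
  have "E \<subseteq> m"
    unfolding E_def eigenspace_form_def by (rule span_minimal[OF _ m]) blast
  have "x \<in> m" and x_E: "\<And>z. z \<in> (\<Union>lam. eigenspace_form m B A lam) \<Longrightarrow> B x z = 0"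
    using \<open>x \<in> W\<close> unfolding W_def E_def by (auto intro: span_base)
  \<comment> \<open>Since m = E + W, it suffices that both A x and B x vanish on E.\<close>
  have "A x u = \<mu> * B x u" if "u \<in> m" for u
  proof -
    obtain e where "e \<in> E" "u - e \<in> W"
      using form_orthogonal_decomposition[OF B m _ \<open>E \<subseteq> m\<close> pos \<open>u \<in> m\<close>]
      unfolding W_def E_def by auto
    moreover have "B x e = 0"
      using \<open>x \<in> W\<close> \<open>e \<in> E\<close> unfolding W_def by blast
    moreover have "A x e = 0"
      using eigenvector_span_form_orthogonal[of A m B x e, OF A symA symB \<open>x \<in> m\<close> x_E] \<open>e \<in> E\<close>
      unfolding E_def by blast
    moreover have "A x (u - e) = \<mu> * B x (u - e)"
      using x \<open>u - e \<in> W\<close> by blast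
    ultimately show ?thesis
      by (simp add: bilinear_rsub[OF A] bilinear_rsub[OF B] algebra_simps)
  qed
  then show ?thesis
    using \<open>x \<in> m\<close> unfolding eigenspace_form_def by blast
qed

lemma symmetric_form_eigenvectors_span:
  fixes A B :: "'a::euclidean_space \<Rightarrow> 'a \<Rightarrow> real"
  assumes A: "bilinear A" and B: "bilinear B" and m: "subspace m"
    and symA: "\<And>x y. x \<in> m \<Longrightarrow> y \<in> m \<Longrightarrow> A x y = A y x"
    and symB: "\<And>x y. x \<in> m \<Longrightarrow> y \<in> m \<Longrightarrow> B x y = B y x"
    and pos: "\<And>x. x \<in> m \<Longrightarrow> x \<noteq> 0 \<Longrightarrow> B x x > 0"
  shows "m \<subseteq> span (\<Union>lam. eigenspace_form m B A lam)"
proof (rule ccontr)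
  define E where "E = span (\<Union>lam. eigenspace_form m B A lam)"
  define W where "W = {w \<in> m. \<forall>e\<in>E. B w e = 0}"
  have "E \<subseteq> m"
    unfolding E_def eigenspace_form_def by (rule span_minimal[OF _ m]) blast
  have "subspace W" "W \<subseteq> m"
    using m B unfolding W_def subspace_def by (auto simp: bilinear_ladd bilinear_lmul bilinear_lzero)
  assume "\<not> m \<subseteq> E"
  then obtain y where "y \<in> m" "y \<notin> E"
    unfolding E_def by blast
  moreover obtain e where "e \<in> E" "y - e \<in> W"
    using form_orthogonal_decomposition[OF B m _ \<open>E \<subseteq> m\<close> pos \<open>y \<in> m\<close>]
    unfolding W_def E_def by auto
  ultimately have "W \<noteq> {0}"
    by auto
  moreover have "A u v = A v u" "B u v = B v u" if "u \<in> W" "v \<in> W" for u v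
    using symA symB that \<open>W \<subseteq> m\<close> by (meson subsetD)+
  moreover have "B u u > 0" if "u \<in> W" "u \<noteq> 0" for u
    using pos that \<open>W \<subseteq> m\<close> by auto
  ultimately obtain x \<mu> where "x \<in> W" "x \<noteq> 0" and x: "\<forall>v\<in>W. A x v = \<mu> * B x v"
    using symmetric_form_has_eigenvector[OF A B \<open>subspace W\<close>] by blast
  then have "x \<in> E"
    using eigenvector_of_form_complement[OF A B m symA symB pos] unfolding E_def W_def
    by (blast intro: span_base)
  then show False
    using \<open>x \<in> W\<close> \<open>x \<noteq> 0\<close> pos unfolding W_def by fastforce
qed

section \<open>Triangularizing chains in nilpotent and split-solvable algebras\<close>

definition triangularizing_chain ::
  "('a::real_vector \<Rightarrow> 'a) \<Rightarrow> 'a set \<Rightarrow> (nat \<Rightarrow> 'a set) \<Rightarrow> nat \<Rightarrow> bool" where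
  "triangularizing_chain f m a p \<longleftrightarrow> m \<subseteq> a 0 \<and> a p \<subseteq> {0} \<and>
     (\<forall>i<p. a i \<subseteq> m \<and> (\<forall>v\<in>a i. \<exists>c. f v - c *\<^sub>R v \<in> a (Suc i)))"

lemma alg_product_in_carrier:
  assumes "alg_product m mul n x" and "\<And>x y. x \<in> m \<Longrightarrow> y \<in> m \<Longrightarrow> mul x y \<in> m"
  shows "x \<in> m"
  using assms by (induction rule: alg_product.induct) auto

lemma alg_nilpotent_triangularizing_chain:
  assumes nil: "alg_nilpotent m mul" and m: "subspace m"
    and closed: "\<And>x y. x \<in> m \<Longrightarrow> y \<in> m \<Longrightarrow> mul x y \<in> m"
    and "X \<in> m" and "linear (mul X)"
  shows "\<exists>a p. triangularizing_chain (mul X) m a p"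
proof -
  obtain t where "t > 0" and t: "\<And>x. alg_product m mul t x \<Longrightarrow> x = 0"
    using nil unfolding alg_nilpotent_def by blast
  \<comment> \<open>Multiplication by X raises the length of a product, so it maps a i into a (i + 1).\<close>
  define a where "a i = span {x. alg_product m mul (i + 1) x}" for i
  have "m \<subseteq> a 0"
    unfolding a_def using alg_product.single[of _ m mul, unfolded One_nat_def]
    by (auto intro: span_base)
  have "a (t - 1) \<subseteq> span {0}"
    unfolding a_def using \<open>t > 0\<close> t by (intro span_mono) auto
  then have "a (t - 1) \<subseteq> {0}"
    by simp
  have "a i \<subseteq> m" for i
    unfolding a_def using alg_product_in_carrier[of m mul, OF _ closed] by (intro span_minimal[OF _ m]) blast
  moreover have "\<exists>c. mul X v - c *\<^sub>R v \<in> a (Suc i)" if "v \<in> a i" for i v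
  proof -
    have "mul X ` {x. alg_product m mul (i + 1) x} \<subseteq> {x. alg_product m mul (Suc i + 1) x}"
      using alg_product.mult[OF alg_product.single[OF \<open>X \<in> m\<close>]] by auto
    then have "span (mul X ` {x. alg_product m mul (i + 1) x}) \<subseteq> a (Suc i)"
      unfolding a_def by (rule span_mono)
    moreover have "mul X v \<in> span (mul X ` {x. alg_product m mul (i + 1) x})"
      using that unfolding a_def span_linear_image[OF \<open>linear (mul X)\<close>] by (rule imageI)
    ultimately have "mul X v - 0 *\<^sub>R v \<in> a (Suc i)"
      by auto
    then show ?thesis
      by blast
  qed
  ultimately have "triangularizing_chain (mul X) m a (t - 1)"
    unfolding triangularizing_chain_def using \<open>m \<subseteq> a 0\<close> \<open>a (t - 1) \<subseteq> {0}\<close> by blast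
  then show ?thesis
    by blast
qed

lemma subspace_codim_one_generator:
  fixes S T :: "'a::euclidean_space set"
  assumes "subspace S" "subspace T" "T \<subseteq> S" "dim S = dim T + 1"
  obtains v0 where "v0 \<in> S" "\<And>v. v \<in> S \<Longrightarrow> \<exists>k. v - k *\<^sub>R v0 \<in> T"
proof -
  have "S \<noteq> T"
    using assms(4) by auto
  then obtain v0 where "v0 \<in> S" "v0 \<notin> T"
    using assms(3) by blast
  have spanT: "span T = T"
    using assms(2) by simp
  define B where "B = span (insert v0 T)"
  have "dim B = dim T + 1"
    using \<open>v0 \<notin> T\<close> unfolding B_def dim_span by (simp add: dim_insert spanT)
  moreover have "B \<subseteq> S"
    unfolding B_def using \<open>v0 \<in> S\<close> assms by (intro span_minimal) auto
  ultimately have "B = S"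
    using assms by (intro subspace_dim_equal) (auto simp: B_def)
  then have "\<exists>k. v - k *\<^sub>R v0 \<in> T" if "v \<in> S" for v
    using that spanT unfolding B_def span_insert by auto
  then show ?thesis
    using that \<open>v0 \<in> S\<close> by blast
qed

lemma alg_split_solvable_triangularizing_chain:
  fixes m :: "'a::euclidean_space set"
  assumes "alg_split_solvable m mul" and "X \<in> m" and "linear (mul X)"
  shows "\<exists>a p. triangularizing_chain (mul X) m a p"
proof -
  obtain a p where "a 0 = m" "a p = {0}" and ideal: "\<And>i. i \<le> p \<Longrightarrow> alg_ideal m mul (a i)"
    and step: "\<And>i. i < p \<Longrightarrow> a (Suc i) \<subseteq> a i \<and> dim (a i) = dim (a (Suc i)) + 1"
    using assms(1) unfolding alg_split_solvable_def by blast
  have "\<exists>c. mul X v - c *\<^sub>R v \<in> a (Suc i)" if "i < p" "v \<in> a i" for i v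
  proof -
    have Si: "subspace (a i)" "\<forall>y\<in>a i. mul X y \<in> a i"
      using ideal[of i] \<open>i < p\<close> \<open>X \<in> m\<close> unfolding alg_ideal_def by auto
    have Ss: "subspace (a (Suc i))" "\<forall>y\<in>a (Suc i). mul X y \<in> a (Suc i)"
      using ideal[of "Suc i"] \<open>i < p\<close> \<open>X \<in> m\<close> unfolding alg_ideal_def by auto
    obtain v0 where "v0 \<in> a i" and v0: "\<And>v. v \<in> a i \<Longrightarrow> \<exists>k. v - k *\<^sub>R v0 \<in> a (Suc i)"
      using subspace_codim_one_generator[OF Si(1) Ss(1)] step \<open>i < p\<close> by blast
    \<comment> \<open>On the one-dimensional quotient a i / a (i + 1), multiplication by X acts as a scalar c.\<close>
    obtain c where c: "mul X v0 - c *\<^sub>R v0 \<in> a (Suc i)"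
      using v0 Si(2) \<open>v0 \<in> a i\<close> by blast
    obtain k where k: "v - k *\<^sub>R v0 \<in> a (Suc i)"
      using v0 \<open>v \<in> a i\<close> by blast
    have "mul X v - c *\<^sub>R v =
        k *\<^sub>R (mul X v0 - c *\<^sub>R v0) + (mul X (v - k *\<^sub>R v0) - c *\<^sub>R (v - k *\<^sub>R v0))"
      using \<open>linear (mul X)\<close> by (simp add: linear_diff linear_scale algebra_simps)
    also have "\<dots> \<in> a (Suc i)"
      using Ss c k by (simp add: subspace_add subspace_diff subspace_scale)
    finally show ?thesis
      by blast
  qed
  moreover have "a i \<subseteq> m" if "i \<le> p" for i
    using ideal[OF that] unfolding alg_ideal_def by blast
  ultimately have "triangularizing_chain (mul X) m a p"
    unfolding triangularizing_chain_def using \<open>a 0 = m\<close> \<open>a p = {0}\<close> by auto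
  then show ?thesis
    by blast
qed

section \<open>The Nomizu map of the Levi-Civita connection\<close>

locale reductive_riemannian_space =
  fixes br :: "'a::euclidean_space \<Rightarrow> 'a \<Rightarrow> 'a"
    and h m :: "'a set"
    and AdH :: "('a \<Rightarrow> 'a) set"
    and ip :: "'a \<Rightarrow> 'a \<Rightarrow> real"
  assumes reductive: "reductive_decomposition br h m AdH"
    and inner_product: "invariant_inner_product br h m AdH ip"
begin

lemma lie_algebra: "lie_algebra br"
  and subspace_h: "subspace h"
  and subspace_m: "subspace m"
  and h_inter_m: "h \<inter> m = {0}"
  and h_plus_m: "\<exists>a\<in>h. \<exists>b\<in>m. x = a + b"
  using reductive unfolding reductive_decomposition_def by (simp_all only:)

lemma bilinear_br: "bilinear br"
  using lie_algebra unfolding lie_algebra_def by blast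

lemma br_antisym: "br x y = - br y x"
proof -
  have "br (x + y) (x + y) = 0" "br x x = 0" "br y y = 0"
    using lie_algebra unfolding lie_algebra_def by blast+
  then show ?thesis
    using bilinear_br by (simp add: bilinear_ladd bilinear_radd eq_neg_iff_add_eq_0)
qed

lemma bilinear_ip: "bilinear ip"
  and ip_sym: "x \<in> m \<Longrightarrow> y \<in> m \<Longrightarrow> ip x y = ip y x"
  and ip_pos: "x \<in> m \<Longrightarrow> x \<noteq> 0 \<Longrightarrow> ip x x > 0"
  using inner_product unfolding invariant_inner_product_def by blast+

lemma ip_eq_0_imp_eq_0: "q \<in> m \<Longrightarrow> (\<And>z. z \<in> m \<Longrightarrow> ip q z = 0) \<Longrightarrow> q = 0"
  using ip_pos by force

lemmas ip_simps = bilinear_ladd[OF bilinear_ip] bilinear_radd[OF bilinear_ip]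
  bilinear_lmul[OF bilinear_ip] bilinear_rmul[OF bilinear_ip]
  bilinear_lneg[OF bilinear_ip] bilinear_rneg[OF bilinear_ip]
  bilinear_lsub[OF bilinear_ip] bilinear_rsub[OF bilinear_ip]
  bilinear_lzero[OF bilinear_ip] bilinear_rzero[OF bilinear_ip]

lemma mproj_eqI:
  assumes "y \<in> m" "x - y \<in> h"
  shows "mproj h m x = y"
  unfolding mproj_def
proof (rule the_equality)
  show "y \<in> m \<and> x - y \<in> h"
    using assms by blast
  fix z
  assume z: "z \<in> m \<and> x - z \<in> h"
  have "y - z \<in> m"
    using assms(1) z subspace_m by (simp add: subspace_diff)
  moreover have "(x - z) - (x - y) \<in> h"
    using subspace_diff[OF subspace_h] z assms(2) by blast
  ultimately have "y - z \<in> h \<inter> m"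
    by simp
  then show "z = y"
    using h_inter_m by simp
qed

lemma mproj_in_m: "mproj h m x \<in> m"
  and diff_mproj_in_h: "x - mproj h m x \<in> h"
proof -
  obtain a b where "a \<in> h" "b \<in> m" "x = a + b"
    using h_plus_m by blast
  moreover from this have "mproj h m x = b"
    by (intro mproj_eqI) simp_all
  ultimately show "mproj h m x \<in> m" "x - mproj h m x \<in> h"
    by simp_all
qed

lemma linear_mproj: "linear (mproj h m)"
proof (rule linearI)
  fix x y
  have "(x - mproj h m x) + (y - mproj h m y) \<in> h"
    using subspace_add[OF subspace_h diff_mproj_in_h diff_mproj_in_h] .
  then show "mproj h m (x + y) = mproj h m x + mproj h m y"
    using subspace_add[OF subspace_m mproj_in_m mproj_in_m]
    by (intro mproj_eqI) (simp_all add: algebra_simps)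
next
  fix c x
  have "c *\<^sub>R (x - mproj h m x) \<in> h"
    using subspace_scale[OF subspace_h diff_mproj_in_h] .
  then show "mproj h m (c *\<^sub>R x) = c *\<^sub>R mproj h m x"
    using subspace_scale[OF subspace_m mproj_in_m]
    by (intro mproj_eqI) (simp_all add: algebra_simps)
qed

abbreviation bm :: "'a \<Rightarrow> 'a \<Rightarrow> 'a"
  where "bm \<equiv> brm br h m"

lemma brm_in_m: "bm x y \<in> m"
  unfolding brm_def by (rule mproj_in_m)

lemma bilinear_brm: "bilinear bm"
  using bilinear_br linear_mproj
  unfolding bilinear_def brm_def by (auto intro: linear_compose[unfolded o_def])

lemma brm_antisym: "bm x y = - bm y x"
  unfolding brm_def using linear_mproj by (simp add: br_antisym[of x y] linear_neg)

lemmas brm_simps = bilinear_ladd[OF bilinear_brm] bilinear_radd[OF bilinear_brm]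
  bilinear_lmul[OF bilinear_brm] bilinear_rmul[OF bilinear_brm]
  bilinear_lneg[OF bilinear_brm] bilinear_rneg[OF bilinear_brm]
  bilinear_lsub[OF bilinear_brm] bilinear_rsub[OF bilinear_brm]
  bilinear_lzero[OF bilinear_brm] bilinear_rzero[OF bilinear_brm]

abbreviation \<Lambda> :: "'a \<Rightarrow> 'a \<Rightarrow> 'a"
  where "\<Lambda> \<equiv> lc_map br h m ip"

lemma lc_map_eqI:
  assumes "W \<in> m"
    and "\<And>Z. Z \<in> m \<Longrightarrow> 2 * ip W Z = ip (bm X Y) Z + ip (bm Z X) Y + ip X (bm Z Y)"
  shows "\<Lambda> X Y = W"
  unfolding lc_map_def
proof (rule the_equality)
  show "W \<in> m \<and> (\<forall>Z\<in>m. 2 * ip W Z = ip (bm X Y) Z + ip (bm Z X) Y + ip X (bm Z Y))"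
    using assms by blast
  fix W'
  assume W': "W' \<in> m \<and> (\<forall>Z\<in>m. 2 * ip W' Z = ip (bm X Y) Z + ip (bm Z X) Y + ip X (bm Z Y))"
  have "ip (W' - W) Z = 0" if "Z \<in> m" for Z
  proof -
    have "2 * ip W' Z = 2 * ip W Z"
      using W' assms(2)[OF that] that by auto
    then show ?thesis
      by (simp add: ip_simps)
  qed
  moreover have "W' - W \<in> m"
    using W' assms(1) subspace_m by (simp add: subspace_diff)
  ultimately show "W' = W"
    using ip_eq_0_imp_eq_0 by force
qed

lemma lc_map_in_m: "\<Lambda> X Y \<in> m"
  and lc_map_inner: "Z \<in> m \<Longrightarrow> 2 * ip (\<Lambda> X Y) Z = ip (bm X Y) Z + ip (bm Z X) Y + ip X (bm Z Y)"
proof -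
  have "linear (\<lambda>Z. (ip (bm X Y) Z + ip (bm Z X) Y + ip X (bm Z Y)) / 2)"
    by (rule linearI) (simp_all add: ip_simps brm_simps add_divide_distrib algebra_simps)
  then obtain q where "q \<in> m" and "\<forall>Z\<in>m. ip q Z = (ip (bm X Y) Z + ip (bm Z X) Y + ip X (bm Z Y)) / 2"
    using bilinear_form_representation[OF bilinear_ip subspace_m] ip_pos by blast
  then have q: "\<forall>Z\<in>m. 2 * ip q Z = ip (bm X Y) Z + ip (bm Z X) Y + ip X (bm Z Y)"
    by (simp add: mult.commute)
  then have "\<Lambda> X Y = q"
    using \<open>q \<in> m\<close> by (intro lc_map_eqI) simp_all
  then show "\<Lambda> X Y \<in> m" "Z \<in> m \<Longrightarrow> 2 * ip (\<Lambda> X Y) Z = ip (bm X Y) Z + ip (bm Z X) Y + ip X (bm Z Y)"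
    using \<open>q \<in> m\<close> q by simp_all
qed

lemma lc_map_skew:
  assumes "X \<in> m" "Y \<in> m" "Z \<in> m"
  shows "ip (\<Lambda> X Y) Z + ip Y (\<Lambda> X Z) = 0"
proof -
  have "ip Y (\<Lambda> X Z) = ip (\<Lambda> X Z) Y"
    using ip_sym lc_map_in_m assms by blast
  moreover have "ip X (bm Y Z) = - ip X (bm Z Y)" "ip (bm Y X) Z = - ip (bm X Y) Z"
    "ip (bm Z X) Y = - ip (bm X Z) Y"
    by (subst brm_antisym; simp add: ip_simps)+
  ultimately show ?thesis
    using lc_map_inner[of Z X Y] lc_map_inner[of Y X Z] assms by simp
qed

lemma lc_map_torsion_free:
  assumes "X \<in> m" "Y \<in> m"
  shows "\<Lambda> X Y - \<Lambda> Y X = bm X Y"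
proof -
  have "ip (\<Lambda> X Y - \<Lambda> Y X - bm X Y) Z = 0" if "Z \<in> m" for Z
  proof -
    have "ip X (bm Z Y) = ip (bm Z Y) X" "ip (bm Z X) Y = ip Y (bm Z X)"
      using ip_sym assms brm_in_m by blast+
    moreover have "ip (bm Y X) Z = - ip (bm X Y) Z"
      by (subst brm_antisym) (simp add: ip_simps)
    ultimately show ?thesis
      using lc_map_inner[of Z X Y] lc_map_inner[of Z Y X] that by (simp add: ip_simps)
  qed
  moreover have "\<Lambda> X Y - \<Lambda> Y X - bm X Y \<in> m"
    using lc_map_in_m brm_in_m subspace_m by (simp add: subspace_diff)
  ultimately show ?thesis
    using ip_eq_0_imp_eq_0 by force
qed

lemma linear_lc_map_left: "linear (\<lambda>X. \<Lambda> X Y)"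
proof (rule linearI)
  fix X X'
  show "\<Lambda> (X + X') Y = \<Lambda> X Y + \<Lambda> X' Y"
    using lc_map_in_m lc_map_inner subspace_m
    by (intro lc_map_eqI) (simp_all add: subspace_add ip_simps brm_simps algebra_simps)
next
  fix c X
  show "\<Lambda> (c *\<^sub>R X) Y = c *\<^sub>R \<Lambda> X Y"
    using lc_map_in_m lc_map_inner subspace_m
    by (intro lc_map_eqI) (simp_all add: subspace_scale ip_simps brm_simps algebra_simps)
qed

lemma linear_cov_deriv_left:
  assumes "bilinear A"
  shows "linear (\<lambda>X. cov_deriv br h m ip A X Y Z)"
proof -
  have "\<Lambda> (X + X') W = \<Lambda> X W + \<Lambda> X' W" "\<Lambda> (c *\<^sub>R X) W = c *\<^sub>R \<Lambda> X W" for X X' c W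
    using linear_add[OF linear_lc_map_left] linear_scale[OF linear_lc_map_left] by auto
  then show ?thesis
    using assms unfolding cov_deriv_def
    by (intro linearI) (simp_all add: bilinear_ladd bilinear_radd bilinear_lmul bilinear_rmul algebra_simps)
qed

end

section \<open>Invariant Codazzi tensors\<close>

locale invariant_codazzi_tensor = reductive_riemannian_space +
  fixes A
  assumes sym_form: "invariant_sym_form br h m AdH A"
    and codazzi: "codazzi br h m ip A"
begin

lemma bilinear_A: "bilinear A"
  and A_sym: "x \<in> m \<Longrightarrow> y \<in> m \<Longrightarrow> A x y = A y x"
  using sym_form unfolding invariant_sym_form_def by blast+

lemmas A_simps = bilinear_ladd[OF bilinear_A] bilinear_radd[OF bilinear_A]
  bilinear_lmul[OF bilinear_A] bilinear_rmul[OF bilinear_A]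
  bilinear_lneg[OF bilinear_A] bilinear_rneg[OF bilinear_A]
  bilinear_lsub[OF bilinear_A] bilinear_rsub[OF bilinear_A]
  bilinear_lzero[OF bilinear_A] bilinear_rzero[OF bilinear_A]

abbreviation A_shift :: "real \<Rightarrow> 'a \<Rightarrow> 'a \<Rightarrow> real"
  where "A_shift lam u v \<equiv> A u v - lam * ip u v"

lemma codazzi_eigenvector_identity:
  assumes X: "X \<in> eigenspace_form m ip A lam" and "Y \<in> m" "Z \<in> m"
  shows "A_shift lam (bm X Y) Z + A_shift lam Y (\<Lambda> X Z) = 0"
proof -
  have "X \<in> m" and eig: "A X (\<Lambda> Y Z) = lam * ip X (\<Lambda> Y Z)"
    using X lc_map_in_m unfolding eigenspace_form_def by auto
  have torsion: "\<Lambda> Y X = \<Lambda> X Y - bm X Y"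
    using lc_map_torsion_free[OF \<open>X \<in> m\<close> \<open>Y \<in> m\<close>] by (simp add: algebra_simps)
  have "cov_deriv br h m ip A X Y Z = cov_deriv br h m ip A Y X Z"
    using codazzi \<open>X \<in> m\<close> \<open>Y \<in> m\<close> \<open>Z \<in> m\<close> unfolding codazzi_def by blast
  then have "lam * ip X (\<Lambda> Y Z) = A (bm X Y) Z + A Y (\<Lambda> X Z)"
    using eig unfolding cov_deriv_def torsion by (simp add: A_simps algebra_simps)
  moreover have "ip X (\<Lambda> Y Z) = ip (bm X Y) Z + ip Y (\<Lambda> X Z)"
    using lc_map_skew[OF \<open>Y \<in> m\<close> \<open>X \<in> m\<close> \<open>Z \<in> m\<close>] lc_map_skew[OF \<open>X \<in> m\<close> \<open>Y \<in> m\<close> \<open>Z \<in> m\<close>]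
    unfolding torsion by (simp add: ip_simps algebra_simps)
  ultimately show ?thesis
    by (simp add: algebra_simps)
qed

lemma codazzi_eigenvector_step:
  assumes X: "X \<in> eigenspace_form m ip A lam" and "v \<in> m"
    and next_step: "\<forall>Z\<in>m. A_shift lam (bm X v - c *\<^sub>R v) (\<Lambda> X Z) = 0"
  shows "\<forall>Z\<in>m. A_shift lam v (\<Lambda> X Z) = 0"
proof -
  have "X \<in> m"
    using X unfolding eigenspace_form_def by blast
  have "linear (A_shift lam v)"
    by (rule linearI) (simp_all add: A_simps ip_simps algebra_simps)
  then obtain p where "p \<in> m" and p: "\<forall>Z\<in>m. ip p Z = A_shift lam v Z"
    using bilinear_form_representation[OF bilinear_ip subspace_m] ip_pos by blast
  \<comment> \<open>By the Codazzi identity q represents A_shift lam (bm X v). Splitting bm X v into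
      (bm X v - c v) + c v gives ip q q = 0: the first part by next_step, the second because
      ip p q = 0 by skewness of \<Lambda> X.\<close>
  define q where "q = \<Lambda> X p"
  have "q \<in> m"
    unfolding q_def by (rule lc_map_in_m)
  have q: "ip q Z = A_shift lam (bm X v) Z" if "Z \<in> m" for Z
  proof -
    have "ip q Z = - ip p (\<Lambda> X Z)"
      using lc_map_skew[OF \<open>X \<in> m\<close> \<open>p \<in> m\<close> that] unfolding q_def by simp
    also have "\<dots> = - A_shift lam v (\<Lambda> X Z)"
      using p lc_map_in_m by simp
    also have "\<dots> = A_shift lam (bm X v) Z"
      using codazzi_eigenvector_identity[OF X \<open>v \<in> m\<close> that] by simp
    finally show ?thesis .
  qed
  have "ip p q = 0"
    using lc_map_skew[OF \<open>X \<in> m\<close> \<open>p \<in> m\<close> \<open>p \<in> m\<close>] ip_sym[OF lc_map_in_m \<open>p \<in> m\<close>]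
    unfolding q_def by simp
  then have "A_shift lam v q = 0"
    using p \<open>q \<in> m\<close> by simp
  moreover have "A_shift lam (bm X v - c *\<^sub>R v) q = 0"
    using next_step \<open>p \<in> m\<close> unfolding q_def by blast
  ultimately have "ip q q = 0"
    using q[OF \<open>q \<in> m\<close>] by (simp add: A_simps ip_simps algebra_simps)
  then have "q = 0"
    using ip_pos \<open>q \<in> m\<close> by fastforce
  then show ?thesis
    using q codazzi_eigenvector_identity[OF X \<open>v \<in> m\<close>] by (simp add: ip_simps)
qed

lemma codazzi_eigenvector_chain:
  assumes X: "X \<in> eigenspace_form m ip A lam"
    and chain: "triangularizing_chain (bm X) m a p"
  shows "\<forall>Y\<in>m. \<forall>Z\<in>m. A_shift lam Y (\<Lambda> X Z) = 0"
proof -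
  have "\<forall>Y\<in>a i. \<forall>Z\<in>m. A_shift lam Y (\<Lambda> X Z) = 0" if "i \<le> p" for i
    using that
  proof (induction rule: inc_induct)
    case base
    then show ?case
      using chain unfolding triangularizing_chain_def by (auto simp: A_simps ip_simps)
  next
    case (step i)
    show ?case
    proof
      fix v
      assume "v \<in> a i"
      then obtain c where "v \<in> m" "bm X v - c *\<^sub>R v \<in> a (Suc i)"
        using chain \<open>i < p\<close> unfolding triangularizing_chain_def by blast
      then show "\<forall>Z\<in>m. A_shift lam v (\<Lambda> X Z) = 0"
        using codazzi_eigenvector_step[OF X] step.IH by blast
    qed
  qed
  then show ?thesis
    using chain unfolding triangularizing_chain_def by blast
qed

lemma cov_deriv_eigenvector_eq_0:
  assumes X: "X \<in> eigenspace_form m ip A lam"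
    and shift: "\<forall>Y\<in>m. \<forall>Z\<in>m. A_shift lam Y (\<Lambda> X Z) = 0"
    and "Y \<in> m" "Z \<in> m"
  shows "cov_deriv br h m ip A X Y Z = 0"
proof -
  have "X \<in> m"
    using X unfolding eigenspace_form_def by blast
  have "A (\<Lambda> X Y) Z = lam * ip Z (\<Lambda> X Y)"
    using shift A_sym[OF lc_map_in_m \<open>Z \<in> m\<close>] \<open>Y \<in> m\<close> \<open>Z \<in> m\<close> by auto
  moreover have "A Y (\<Lambda> X Z) = lam * ip Y (\<Lambda> X Z)"
    using shift \<open>Y \<in> m\<close> \<open>Z \<in> m\<close> by auto
  moreover have "ip Z (\<Lambda> X Y) = - ip Y (\<Lambda> X Z)"
    using lc_map_skew[OF \<open>X \<in> m\<close> \<open>Y \<in> m\<close> \<open>Z \<in> m\<close>] ip_sym[OF lc_map_in_m \<open>Z \<in> m\<close>] by simp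
  ultimately show ?thesis
    unfolding cov_deriv_def by simp
qed

lemma cov_deriv_eq_0_if_triangularizing:
  assumes chains: "\<And>X. X \<in> m \<Longrightarrow> \<exists>a p. triangularizing_chain (bm X) m a p"
    and "X \<in> m" "Y \<in> m" "Z \<in> m"
  shows "cov_deriv br h m ip A X Y Z = 0"
proof -
  have "X \<in> span (\<Union>lam. eigenspace_form m ip A lam)"
    using symmetric_form_eigenvectors_span[OF bilinear_A bilinear_ip subspace_m A_sym ip_sym ip_pos]
      \<open>X \<in> m\<close> by blast
  moreover have "cov_deriv br h m ip A E Y Z = 0" if "E \<in> eigenspace_form m ip A lam" for E lam
  proof -
    have "E \<in> m"
      using that unfolding eigenspace_form_def by blast
    then obtain a p where "triangularizing_chain (bm E) m a p"
      using chains by blast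
    then show ?thesis
      using codazzi_eigenvector_chain[OF that] cov_deriv_eigenvector_eq_0[OF that]
        \<open>Y \<in> m\<close> \<open>Z \<in> m\<close> by blast
  qed
  ultimately show ?thesis
    using linear_eq_0_on_span[OF linear_cov_deriv_left[OF bilinear_A]] by blast
qed

end

theorem proposition2p3:
  fixes br :: "'g::euclidean_space \<Rightarrow> 'g \<Rightarrow> 'g"
    and h m :: "'g set"
    and AdH :: "('g \<Rightarrow> 'g) set"
    and ip A :: "'g \<Rightarrow> 'g \<Rightarrow> real"
  assumes "reductive_decomposition br h m AdH"
    and "invariant_inner_product br h m AdH ip"
    and "essential_codazzi br h m AdH ip A"
  shows "\<not> alg_nilpotent m (brm br h m) \<and> \<not> alg_split_solvable m (brm br h m)"
proof -
  have "invariant_sym_form br h m AdH A" "codazzi br h m ip A"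
    and not_parallel: "\<exists>X\<in>m. \<exists>Y\<in>m. \<exists>Z\<in>m. cov_deriv br h m ip A X Y Z \<noteq> 0"
    using assms(3) unfolding essential_codazzi_def by (simp_all only:)
  then interpret invariant_codazzi_tensor br h m AdH ip A
    using assms(1,2) by unfold_locales
  have "linear (bm X)" for X
    using bilinear_brm by (simp add: bilinear_def)
  moreover have "\<not> (\<forall>X\<in>m. \<exists>a p. triangularizing_chain (bm X) m a p)"
    using not_parallel cov_deriv_eq_0_if_triangularizing by blast
  ultimately show ?thesis
    using alg_nilpotent_triangularizing_chain[of m bm] alg_split_solvable_triangularizing_chain[of m bm]
      subspace_m brm_in_m by blast
qed

end
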